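(* Let $M$ be a left $H$-module with action $\triangleright$, and let $T\in\mathrm{End}_k(M)$ be a projection ($T^2=T$). For $h\in H$ put $$T_h=h_{(1)}\triangleright T(S(h_{(2)})\triangleright -),\qquad \tilde T_h=S(h_{(1)})\triangleright T(h_{(2)}\triangleright -).$$ The following are equivalent: (i) $T_h\circ T=T\circ T_h$ for all $h\in H$; (ii) $\tilde T_h\circ T=T\circ\tilde T_h$ for all $h\in H$; (iii) $T_h\circ\tilde T_k=\tilde T_k\circ T_h$ for all $h,k\in H$.
   Context: Throughout, $k$ is a field and $H$ is a Hopf algebra over $k$ with bijective antipode $S$ and Sweedler notation $\Delta(h)=h_{(1)}\otimes h_{(2)}$. Condition (i) is called the c-condition and condition (ii) the $\tilde c$-condition. *)

theory Defs
  imports Complex_Main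
begin

text \<open>The coproduct is
given in Sweedler form: \<open>\<Delta> h\<close> is a finite list of pairs \<open>(h1, h2)\<close> representing the tensor
\<open>\<Sum> h1 \<otimes> h2\<close> in \<open>H \<otimes> H\<close>.  Since this representation is not unique, all coalgebra axioms
are stated through (multi)linear forms into \<open>k\<close>, which separate the points of tensor
products of vector spaces.\<close>

definition bilin_form :: "('k::field \<Rightarrow> 'h::ab_group_add \<Rightarrow> 'h) \<Rightarrow> ('h \<Rightarrow> 'h \<Rightarrow> 'k) \<Rightarrow> bool" where
  "bilin_form sH f \<longleftrightarrow> (\<forall>x. Vector_Spaces.linear sH (*) (f x)) \<and> (\<forall>y. Vector_Spaces.linear sH (*) (\<lambda>x. f x y))"

definition trilin_form :: "('k::field \<Rightarrow> 'h::ab_group_add \<Rightarrow> 'h) \<Rightarrow> ('h \<Rightarrow> 'h \<Rightarrow> 'h \<Rightarrow> 'k) \<Rightarrow> bool" where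
  "trilin_form sH t \<longleftrightarrow> (\<forall>x y. Vector_Spaces.linear sH (*) (t x y)) \<and>
     (\<forall>x z. Vector_Spaces.linear sH (*) (\<lambda>y. t x y z)) \<and> (\<forall>y z. Vector_Spaces.linear sH (*) (\<lambda>x. t x y z))"

definition swsum :: "('h \<Rightarrow> 'h \<Rightarrow> 'v::monoid_add) \<Rightarrow> ('h \<times> 'h) list \<Rightarrow> 'v" where
  "swsum f xs = sum_list (map (\<lambda>(a, b). f a b) xs)"

definition k_algebra :: "('k::field \<Rightarrow> 'h::ring_1 \<Rightarrow> 'h) \<Rightarrow> bool" where
  "k_algebra sH \<longleftrightarrow> vector_space sH \<and>
     (\<forall>c x y. sH c (x * y) = sH c x * y \<and> sH c (x * y) = x * sH c y)"

definition hopf_algebra ::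
  "('k::field \<Rightarrow> 'h::ring_1 \<Rightarrow> 'h) \<Rightarrow> ('h \<Rightarrow> ('h \<times> 'h) list) \<Rightarrow> ('h \<Rightarrow> 'k) \<Rightarrow> ('h \<Rightarrow> 'h) \<Rightarrow> bool" where
  "hopf_algebra sH \<Delta> \<epsilon> S \<longleftrightarrow>
     k_algebra sH \<and>
     \<comment> \<open>\<Delta> is a k-linear map H \<rightarrow> H \<otimes> H\<close>
     (\<forall>f. bilin_form sH f \<longrightarrow> Vector_Spaces.linear sH (*) (\<lambda>h. swsum f (\<Delta> h))) \<and>
     \<comment> \<open>coassociativity\<close>
     (\<forall>t h. trilin_form sH t \<longrightarrow>
        swsum (\<lambda>a b. swsum (\<lambda>c d. t c d b) (\<Delta> a)) (\<Delta> h) =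
        swsum (\<lambda>a b. swsum (\<lambda>c d. t a c d) (\<Delta> b)) (\<Delta> h)) \<and>
     \<comment> \<open>counit\<close>
     Vector_Spaces.linear sH (*) \<epsilon> \<and>
     (\<forall>h. swsum (\<lambda>a b. sH (\<epsilon> a) b) (\<Delta> h) = h) \<and>
     (\<forall>h. swsum (\<lambda>a b. sH (\<epsilon> b) a) (\<Delta> h) = h) \<and>
     \<comment> \<open>\<Delta> and \<epsilon> are algebra maps\<close>
     (\<forall>f x y. bilin_form sH f \<longrightarrow>
        swsum f (\<Delta> (x * y)) = swsum (\<lambda>a b. swsum (\<lambda>c d. f (a * c) (b * d)) (\<Delta> y)) (\<Delta> x)) \<and>
     (\<forall>f. bilin_form sH f \<longrightarrow> swsum f (\<Delta> 1) = f 1 1) \<and>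
     (\<forall>x y. \<epsilon> (x * y) = \<epsilon> x * \<epsilon> y) \<and> \<epsilon> 1 = 1 \<and>
     \<comment> \<open>antipode\<close>
     Vector_Spaces.linear sH sH S \<and>
     (\<forall>h. swsum (\<lambda>a b. S a * b) (\<Delta> h) = sH (\<epsilon> h) 1) \<and>
     (\<forall>h. swsum (\<lambda>a b. a * S b) (\<Delta> h) = sH (\<epsilon> h) 1)"

definition left_hmodule ::
  "('k::field \<Rightarrow> 'h::ring_1 \<Rightarrow> 'h) \<Rightarrow> ('k \<Rightarrow> 'm::ab_group_add \<Rightarrow> 'm) \<Rightarrow> ('h \<Rightarrow> 'm \<Rightarrow> 'm) \<Rightarrow> bool" where
  "left_hmodule sH sM act \<longleftrightarrow> vector_space sM \<and>
     (\<forall>h. Vector_Spaces.linear sM sM (act h)) \<and>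
     (\<forall>m. Vector_Spaces.linear sH sM (\<lambda>h. act h m)) \<and>
     (\<forall>x y m. act (x * y) m = act x (act y m)) \<and> (\<forall>m. act 1 m = m)"

definition T_op :: "('h \<Rightarrow> ('h \<times> 'h) list) \<Rightarrow> ('h \<Rightarrow> 'h) \<Rightarrow> ('h \<Rightarrow> 'm::monoid_add \<Rightarrow> 'm) \<Rightarrow> ('m \<Rightarrow> 'm) \<Rightarrow> 'h \<Rightarrow> 'm \<Rightarrow> 'm" where
  "T_op \<Delta> S act T h m = swsum (\<lambda>a b. act a (T (act (S b) m))) (\<Delta> h)"

definition Tt_op :: "('h \<Rightarrow> ('h \<times> 'h) list) \<Rightarrow> ('h \<Rightarrow> 'h) \<Rightarrow> ('h \<Rightarrow> 'm::monoid_add \<Rightarrow> 'm) \<Rightarrow> ('m \<Rightarrow> 'm) \<Rightarrow> 'h \<Rightarrow> 'm \<Rightarrow> 'm" where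
  "Tt_op \<Delta> S act T h m = swsum (\<lambda>a b. act (S a) (T (act b m))) (\<Delta> h)"

end

theory Submission
  imports Defs
begin

text \<open>The operators \<open>T_h\<close> and \<open>T~_h\<close> undo each other in Sweedler sums:
\<open>\<Sum> S(h1) \<triangleright> T_(h2) m = T(S(h) \<triangleright> m)\<close> and \<open>\<Sum> T_(h1)(h2 \<triangleright> m) = h \<triangleright> T m\<close>, and dually for \<open>T~\<close>.
Writing \<open>Z(T~_k m) = \<Sum> Z(S(k1) \<triangleright> T(k2 \<triangleright> m))\<close> and inserting these identities with \<open>T\<close>
replaced by an arbitrary linear \<open>Z\<close> shows: if every \<open>Z_d\<close> commutes with \<open>T\<close>, then \<open>Z\<close>
commutes with every \<open>T~_k\<close>.  With \<open>Z = T\<close> this is (i) \<open>\<Longrightarrow>\<close> (ii), and its mirror image gives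
(ii) \<open>\<Longrightarrow>\<close> (i).  With \<open>Z = T_h\<close> it gives (i) \<open>\<Longrightarrow>\<close> (iii), because \<open>(T_h)_d = T_(dh)\<close> by
anti-multiplicativity of the antipode; finally (iii) \<open>\<Longrightarrow>\<close> (ii) is the case \<open>h = 1\<close>.
Since a Sweedler representation of \<open>\<Delta> h\<close> is not unique, the coalgebra axioms are only given
on forms into \<open>k\<close>; they transfer to arbitrary vector spaces because linear forms separate
points.\<close>

text \<open>Linearity without the vector space axioms on domain and codomain, so that composites
of linear maps are linear without side conditions.\<close>
definition k_linear ::
  "('k::field \<Rightarrow> 'a::ab_group_add \<Rightarrow> 'a) \<Rightarrow> ('k \<Rightarrow> 'b::ab_group_add \<Rightarrow> 'b) \<Rightarrow> ('a \<Rightarrow> 'b) \<Rightarrow> bool" where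
  "k_linear s1 s2 f \<longleftrightarrow> (\<forall>x y. f (x + y) = f x + f y) \<and> (\<forall>c x. f (s1 c x) = s2 c (f x))"

lemma linear_iff_k_linear:
  "Vector_Spaces.linear s1 s2 f \<longleftrightarrow> vector_space s1 \<and> vector_space s2 \<and> k_linear s1 s2 f"
  unfolding Vector_Spaces.linear_iff k_linear_def by auto

lemma k_linear_add: "k_linear s1 s2 f \<Longrightarrow> f (x + y) = f x + f y"
  by (simp add: k_linear_def)

lemma k_linear_scale: "k_linear s1 s2 f \<Longrightarrow> f (s1 c x) = s2 c (f x)"
  by (simp add: k_linear_def)

lemma k_linear_0: "k_linear s1 s2 f \<Longrightarrow> f 0 = 0"
  using k_linear_add[of s1 s2 f 0 0] by simp

lemma k_linear_ident: "k_linear s s (\<lambda>x. x)"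
  by (simp add: k_linear_def)

lemma k_linear_compose: "k_linear s2 s3 g \<Longrightarrow> k_linear s1 s2 f \<Longrightarrow> k_linear s1 s3 (\<lambda>x. g (f x))"
  by (simp add: k_linear_def)

lemma vector_space_field_mult: "vector_space ((*) :: 'k::field \<Rightarrow> 'k \<Rightarrow> 'k)"
  by (simp add: vector_space_def algebra_simps)

lemma eq_if_linear_forms_eq:
  fixes s :: "'k::field \<Rightarrow> 'v::ab_group_add \<Rightarrow> 'v"
  assumes vs: "vector_space s"
    and forms_eq: "\<And>\<phi>. k_linear s ((*) :: 'k \<Rightarrow> 'k \<Rightarrow> 'k) \<phi> \<Longrightarrow> \<phi> x = \<phi> y"
  shows "x = y"
proof (rule ccontr)
  assume "x \<noteq> y"
  interpret pair: vector_space_pair s "(*) :: 'k \<Rightarrow> 'k \<Rightarrow> 'k"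
    using vs vector_space_field_mult by (simp add: vector_space_pair_def)
  have "pair.vs1.independent {x - y}"
    using \<open>x \<noteq> y\<close> by simp
  from pair.linear_independent_extend[OF this, of "\<lambda>_. 1"]
  obtain \<phi> where "Vector_Spaces.linear s (*) \<phi>" and \<phi>_diff: "\<phi> (x - y) = 1"
    by auto
  then have \<phi>: "k_linear s (*) \<phi>"
    by (simp add: linear_iff_k_linear)
  have "\<phi> x = \<phi> (x - y) + \<phi> y"
    using k_linear_add[OF \<phi>, of "x - y" y] by simp
  with \<phi>_diff forms_eq[OF \<phi>] show False
    by simp
qed

lemma swsum_Nil [simp]: "swsum f [] = 0"
  by (simp add: swsum_def)

lemma swsum_Cons [simp]: "swsum f ((a, b) # xs) = f a b + swsum f xs"
  by (simp add: swsum_def)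

lemma swsum_cong: "(\<And>a b. f a b = g a b) \<Longrightarrow> swsum f xs = swsum g xs"
  by (induction xs) auto

lemma swsum_0: "swsum (\<lambda>a b. 0) xs = 0"
  by (induction xs) auto

lemma swsum_distrib:
  "swsum (\<lambda>a b. (f a b :: 'v::comm_monoid_add) + g a b) xs = swsum f xs + swsum g xs"
  by (induction xs) (auto simp: add_ac)

lemma swsum_swap:
  "swsum (\<lambda>a b. swsum (\<lambda>c d. (F a b c d :: 'v::comm_monoid_add)) ys) xs =
   swsum (\<lambda>c d. swsum (\<lambda>a b. F a b c d) xs) ys"
proof (induction xs)
  case Nil
  then show ?case by (simp add: swsum_0)
next
  case (Cons p xs)
  then show ?case by (cases p) (simp add: swsum_distrib)
qed

lemma k_linear_swsum: "k_linear s1 s2 g \<Longrightarrow> g (swsum f xs) = swsum (\<lambda>a b. g (f a b)) xs"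
  by (induction xs) (auto simp: k_linear_0 k_linear_add)

lemma k_linear_compose_swsum:
  assumes vs: "vector_space s2" and F: "\<And>a b. k_linear s1 s2 (F a b)"
  shows "k_linear s1 s2 (\<lambda>x. swsum (\<lambda>a b. F a b x) xs)"
proof -
  interpret V: vector_space s2
    by (rule vs)
  show ?thesis
  proof (induction xs)
    case Nil
    then show ?case
      by (simp add: k_linear_def)
  next
    case (Cons p xs)
    obtain a b where p: "p = (a, b)"
      by (cases p)
    show ?case
      unfolding p k_linear_def
      using k_linear_add[OF F[of a b]] k_linear_scale[OF F[of a b]]
        k_linear_add[OF Cons] k_linear_scale[OF Cons]
      by (simp add: algebra_simps V.scale_right_distrib)
  qed
qed

section \<open>Hopf algebras acting on a module\<close>

locale hopf_module =
  fixes sH :: "'k::field \<Rightarrow> 'h::ring_1 \<Rightarrow> 'h"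
    and \<Delta> :: "'h \<Rightarrow> ('h \<times> 'h) list" and \<epsilon> :: "'h \<Rightarrow> 'k" and S :: "'h \<Rightarrow> 'h"
    and sM :: "'k \<Rightarrow> 'm::ab_group_add \<Rightarrow> 'm" and act :: "'h \<Rightarrow> 'm \<Rightarrow> 'm"
  assumes hopf: "hopf_algebra sH \<Delta> \<epsilon> S" and module: "left_hmodule sH sM act"
begin

sublocale H: vector_space sH
  using hopf by (simp add: hopf_algebra_def k_algebra_def)

sublocale M: vector_space sM
  using module by (simp add: left_hmodule_def)

lemma scale_mult_left: "sH c (x * y) = sH c x * y"
  using hopf unfolding hopf_algebra_def k_algebra_def by blast

lemma scale_mult_right: "sH c (x * y) = x * sH c y"
  using hopf unfolding hopf_algebra_def k_algebra_def by blast

lemma act_mult: "act (x * y) m = act x (act y m)"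
  using module by (simp add: left_hmodule_def)

lemma act_one: "act 1 m = m"
  using module by (simp add: left_hmodule_def)

lemma k_linear_S: "k_linear sH sH S"
  using hopf by (simp add: hopf_algebra_def linear_iff_k_linear)

lemma k_linear_act: "k_linear sM sM (act h)"
  using module by (simp add: left_hmodule_def linear_iff_k_linear)

lemma k_linear_act_on: "k_linear sH sM (\<lambda>h. act h m)"
  using module by (simp add: left_hmodule_def linear_iff_k_linear)

lemma counit_left: "swsum (\<lambda>a b. sH (\<epsilon> a) b) (\<Delta> h) = h"
  using hopf by (simp add: hopf_algebra_def)

lemma counit_right: "swsum (\<lambda>a b. sH (\<epsilon> b) a) (\<Delta> h) = h"
  using hopf by (simp add: hopf_algebra_def)

lemma counit_mult: "\<epsilon> (x * y) = \<epsilon> x * \<epsilon> y"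
  using hopf by (simp add: hopf_algebra_def)

lemma counit_one: "\<epsilon> 1 = 1"
  using hopf by (simp add: hopf_algebra_def)

lemma antipode_left: "swsum (\<lambda>a b. S a * b) (\<Delta> h) = sH (\<epsilon> h) 1"
  using hopf by (simp add: hopf_algebra_def)

lemma antipode_right: "swsum (\<lambda>a b. a * S b) (\<Delta> h) = sH (\<epsilon> h) 1"
  using hopf by (simp add: hopf_algebra_def)

lemma k_linear_act_left: "k_linear s1 sH f \<Longrightarrow> k_linear s1 sM (\<lambda>x. act (f x) m)"
  by (rule k_linear_compose[OF k_linear_act_on])

lemma k_linear_act_right: "k_linear s1 sM f \<Longrightarrow> k_linear s1 sM (\<lambda>x. act h (f x))"
  by (rule k_linear_compose[OF k_linear_act])

lemma k_linear_S_left: "k_linear s1 sH f \<Longrightarrow> k_linear s1 sH (\<lambda>x. S (f x))"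
  by (rule k_linear_compose[OF k_linear_S])

lemma k_linear_mult_const_right: "k_linear s1 sH f \<Longrightarrow> k_linear s1 sH (\<lambda>x. f x * c)"
  by (simp add: k_linear_def distrib_right scale_mult_left)

lemma k_linear_mult_const_left: "k_linear s1 sH f \<Longrightarrow> k_linear s1 sH (\<lambda>x. c * f x)"
  by (simp add: k_linear_def distrib_left scale_mult_right)

lemma k_linear_scale_H: "k_linear s1 sH f \<Longrightarrow> k_linear s1 sH (\<lambda>x. sH c (f x))"
  by (simp add: k_linear_def H.scale_right_distrib H.scale_left_commute)

lemma bilin_form_compose:
  assumes "k_linear sV (*) \<phi>" "\<And>a. k_linear sH sV (F a)" "\<And>b. k_linear sH sV (\<lambda>a. F a b)"
  shows "bilin_form sH (\<lambda>a b. \<phi> (F a b))"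
  unfolding bilin_form_def linear_iff_k_linear
  using assms H.vector_space_axioms vector_space_field_mult
  by (auto intro: k_linear_compose[OF assms(1)])

lemma trilin_form_compose:
  assumes "k_linear sV (*) \<phi>" "\<And>a b. k_linear sH sV (t a b)"
    "\<And>a c. k_linear sH sV (\<lambda>b. t a b c)" "\<And>b c. k_linear sH sV (\<lambda>a. t a b c)"
  shows "trilin_form sH (\<lambda>a b c. \<phi> (t a b c))"
  unfolding trilin_form_def linear_iff_k_linear
  using assms H.vector_space_axioms vector_space_field_mult
  by (auto intro: k_linear_compose[OF assms(1)])

subsection \<open>The coalgebra axioms with values in an arbitrary vector space\<close>

lemma k_linear_swsum_Delta:
  assumes vs: "vector_space sV"
    and F: "\<And>a. k_linear sH sV (F a)" "\<And>b. k_linear sH sV (\<lambda>a. F a b)"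
  shows "k_linear sH sV (\<lambda>h. swsum F (\<Delta> h))"
proof -
  have form: "k_linear sH (*) (\<lambda>h. \<phi> (swsum F (\<Delta> h)))" if \<phi>: "k_linear sV (*) \<phi>" for \<phi>
    using hopf bilin_form_compose[OF \<phi> F]
    by (simp add: hopf_algebra_def linear_iff_k_linear k_linear_swsum[OF \<phi>])
  show ?thesis
    unfolding k_linear_def
  proof (intro conjI allI)
    fix x y
    show "swsum F (\<Delta> (x + y)) = swsum F (\<Delta> x) + swsum F (\<Delta> y)"
      by (rule eq_if_linear_forms_eq[OF vs])
        (simp add: k_linear_add[OF form] k_linear_add)
  next
    fix c x
    show "swsum F (\<Delta> (sH c x)) = sV c (swsum F (\<Delta> x))"
      by (rule eq_if_linear_forms_eq[OF vs])
        (simp add: k_linear_scale[OF form] k_linear_scale)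
  qed
qed

lemma Delta_coassoc:
  assumes vs: "vector_space sV"
    and t: "\<And>a b. k_linear sH sV (t a b)"
      "\<And>a c. k_linear sH sV (\<lambda>b. t a b c)" "\<And>b c. k_linear sH sV (\<lambda>a. t a b c)"
  shows "swsum (\<lambda>a b. swsum (\<lambda>c d. t c d b) (\<Delta> a)) (\<Delta> h) =
         swsum (\<lambda>a b. swsum (\<lambda>c d. t a c d) (\<Delta> b)) (\<Delta> h)"
  using hopf trilin_form_compose[OF _ t]
  by (intro eq_if_linear_forms_eq[OF vs]) (simp add: hopf_algebra_def k_linear_swsum)

lemma Delta_mult:
  assumes vs: "vector_space sV"
    and F: "\<And>a. k_linear sH sV (F a)" "\<And>b. k_linear sH sV (\<lambda>a. F a b)"
  shows "swsum F (\<Delta> (x * y)) = swsum (\<lambda>a b. swsum (\<lambda>c d. F (a * c) (b * d)) (\<Delta> y)) (\<Delta> x)"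
  using hopf bilin_form_compose[OF _ F]
  by (intro eq_if_linear_forms_eq[OF vs]) (simp add: hopf_algebra_def k_linear_swsum)

lemma Delta_one:
  assumes vs: "vector_space sV"
    and F: "\<And>a. k_linear sH sV (F a)" "\<And>b. k_linear sH sV (\<lambda>a. F a b)"
  shows "swsum F (\<Delta> 1) = F 1 1"
  using hopf bilin_form_compose[OF _ F]
  by (intro eq_if_linear_forms_eq[OF vs]) (simp add: hopf_algebra_def k_linear_swsum)

lemma swsum_counit_left:
  assumes g: "k_linear sH sV g"
  shows "swsum (\<lambda>a b. sV (\<epsilon> a) (g b)) (\<Delta> h) = g h"
  using k_linear_swsum[OF g, of "\<lambda>a b. sH (\<epsilon> a) b" "\<Delta> h"]
  by (simp add: counit_left k_linear_scale[OF g])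

lemma swsum_counit_right:
  assumes g: "k_linear sH sV g"
  shows "swsum (\<lambda>a b. sV (\<epsilon> b) (g a)) (\<Delta> h) = g h"
  using k_linear_swsum[OF g, of "\<lambda>a b. sH (\<epsilon> b) a" "\<Delta> h"]
  by (simp add: counit_right k_linear_scale[OF g])

lemma swsum_antipode_left:
  assumes g: "k_linear sH sV g"
  shows "swsum (\<lambda>a b. g (S a * b)) (\<Delta> h) = sV (\<epsilon> h) (g 1)"
  using k_linear_swsum[OF g, of "\<lambda>a b. S a * b" "\<Delta> h"]
  by (simp add: antipode_left k_linear_scale[OF g])

lemma swsum_antipode_right:
  assumes g: "k_linear sH sV g"
  shows "swsum (\<lambda>a b. g (a * S b)) (\<Delta> h) = sV (\<epsilon> h) (g 1)"
  using k_linear_swsum[OF g, of "\<lambda>a b. a * S b" "\<Delta> h"]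
  by (simp add: antipode_right k_linear_scale[OF g])

lemmas k_linear_intros = k_linear_ident k_linear_act_left k_linear_act_right k_linear_S_left
  k_linear_mult_const_right k_linear_mult_const_left k_linear_scale_H
  k_linear_swsum_Delta k_linear_compose_swsum H.vector_space_axioms M.vector_space_axioms

subsection \<open>The antipode is an anti-algebra map\<close>

lemma S_one: "S 1 = 1"
proof -
  have "swsum (\<lambda>a b. S a * b) (\<Delta> 1) = S 1 * 1"
    by (rule Delta_one[OF H.vector_space_axioms]) (intro k_linear_intros)+
  then show ?thesis
    using antipode_left[of 1] by (simp add: counit_one)
qed

text \<open>\<open>\<Sum> S(x1 y1) x2 y2 S(y3) S(x3)\<close>: evaluated from the inside it is \<open>S(xy)\<close>, evaluated
from the outside it is \<open>S(y) S(x)\<close>.\<close>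
definition antipode_sandwich :: "'h \<Rightarrow> 'h \<Rightarrow> 'h" where
  "antipode_sandwich x y = swsum (\<lambda>x1 x2. swsum (\<lambda>y1 y2. swsum (\<lambda>b e. swsum (\<lambda>d f.
     S (x1 * y1) * (b * (d * (S f * S e)))) (\<Delta> y2)) (\<Delta> x2)) (\<Delta> y)) (\<Delta> x)"

lemma antipode_sandwich_eq_S_mult: "antipode_sandwich x y = S (x * y)"
proof -
  have inner: "swsum (\<lambda>d f. S (x1 * y1) * (b * (d * (S f * S e)))) (\<Delta> y2)
      = sH (\<epsilon> y2) (S (x1 * y1) * (b * S e))" for x1 y1 y2 b e
    using swsum_antipode_right[where sV=sH and g="\<lambda>u. S (x1 * y1) * (b * (u * S e))"]
    by (simp add: k_linear_intros mult.assoc)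
  have "antipode_sandwich x y = swsum (\<lambda>x1 x2. swsum (\<lambda>b e. swsum (\<lambda>y1 y2.
      sH (\<epsilon> y2) (S (x1 * y1) * (b * S e))) (\<Delta> y)) (\<Delta> x2)) (\<Delta> x)"
    unfolding antipode_sandwich_def inner
    by (rule swsum_cong, rule swsum_swap)
  also have "\<dots> = swsum (\<lambda>x1 x2. swsum (\<lambda>b e. S (x1 * y) * (b * S e)) (\<Delta> x2)) (\<Delta> x)"
    using swsum_counit_right[where sV=sH and g="\<lambda>u. S (a * u) * (b * S e)" for a b e]
    by (simp add: k_linear_intros)
  also have "\<dots> = swsum (\<lambda>x1 x2. sH (\<epsilon> x2) (S (x1 * y))) (\<Delta> x)"
    using swsum_antipode_right[where sV=sH and g="\<lambda>u. S (a * y) * u" for a]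
    by (simp add: k_linear_intros)
  also have "\<dots> = S (x * y)"
    by (rule swsum_counit_right) (intro k_linear_intros)
  finally show ?thesis .
qed

lemma antipode_sandwich_eq_S_mult_rev: "antipode_sandwich x y = S y * S x"
proof -
  have outer: "swsum (\<lambda>y1 d. swsum (\<lambda>x1 b. S (x1 * y1) * (b * (d * B))) (\<Delta> a)) (\<Delta> c)
      = sH (\<epsilon> (a * c)) B" for a c B
  proof -
    have "swsum (\<lambda>u v. S u * (v * B)) (\<Delta> (a * c))
        = swsum (\<lambda>x1 b. swsum (\<lambda>y1 d. S (x1 * y1) * (b * d * B)) (\<Delta> c)) (\<Delta> a)"
      by (rule Delta_mult[OF H.vector_space_axioms]) (intro k_linear_intros)+
    moreover have "swsum (\<lambda>u v. S u * (v * B)) (\<Delta> (a * c)) = sH (\<epsilon> (a * c)) B"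
      using swsum_antipode_left[where sV=sH and g="\<lambda>u. u * B"]
      by (simp add: k_linear_intros mult.assoc)
    ultimately show ?thesis
      by (simp add: mult.assoc swsum_swap[of _ "\<Delta> c"])
  qed
  have "antipode_sandwich x y = swsum (\<lambda>x1 x2. swsum (\<lambda>b e. swsum (\<lambda>y1 y2. swsum (\<lambda>d f.
      S (x1 * y1) * (b * (d * (S f * S e)))) (\<Delta> y2)) (\<Delta> y)) (\<Delta> x2)) (\<Delta> x)"
    unfolding antipode_sandwich_def by (rule swsum_cong, rule swsum_swap)
  also have "\<dots> = swsum (\<lambda>a e. swsum (\<lambda>x1 b. swsum (\<lambda>y1 y2. swsum (\<lambda>d f.
      S (x1 * y1) * (b * (d * (S f * S e)))) (\<Delta> y2)) (\<Delta> y)) (\<Delta> a)) (\<Delta> x)"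
    by (rule Delta_coassoc[OF H.vector_space_axioms, symmetric]) (intro k_linear_intros)+
  also have "\<dots> = swsum (\<lambda>a e. swsum (\<lambda>y1 y2. swsum (\<lambda>d f. swsum (\<lambda>x1 b.
      S (x1 * y1) * (b * (d * (S f * S e)))) (\<Delta> a)) (\<Delta> y2)) (\<Delta> y)) (\<Delta> x)"
    by (rule swsum_cong, rule trans[OF swsum_swap], rule swsum_cong, rule swsum_swap)
  also have "\<dots> = swsum (\<lambda>a e. swsum (\<lambda>c f. swsum (\<lambda>y1 d. swsum (\<lambda>x1 b.
      S (x1 * y1) * (b * (d * (S f * S e)))) (\<Delta> a)) (\<Delta> c)) (\<Delta> y)) (\<Delta> x)"
    by (rule swsum_cong, rule Delta_coassoc[OF H.vector_space_axioms, symmetric])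
      (intro k_linear_intros)+
  also have "\<dots> = swsum (\<lambda>a e. sH (\<epsilon> a) (swsum (\<lambda>c f. sH (\<epsilon> c) (S f * S e)) (\<Delta> y))) (\<Delta> x)"
    by (simp add: outer counit_mult k_linear_swsum[OF k_linear_scale_H[OF k_linear_ident]])
  also have "\<dots> = S y * S x"
    using swsum_counit_left[where sV=sH and g="\<lambda>u. S u * S e" for e]
      swsum_counit_left[where sV=sH and g="\<lambda>u. S y * S u"]
    by (simp add: k_linear_intros)
  finally show ?thesis .
qed

lemma S_mult: "S (x * y) = S y * S x"
  using antipode_sandwich_eq_S_mult antipode_sandwich_eq_S_mult_rev by simp

lemma k_linear_T_op:
  assumes X: "k_linear sM sM X" and f: "k_linear s1 sM f"
  shows "k_linear s1 sM (\<lambda>x. T_op \<Delta> S act X h (f x))"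
  unfolding T_op_def by (intro k_linear_intros k_linear_compose[OF X] f)

lemma k_linear_T_op_index:
  assumes X: "k_linear sM sM X" and f: "k_linear s1 sH f"
  shows "k_linear s1 sM (\<lambda>x. T_op \<Delta> S act X (f x) m)"
  unfolding T_op_def
  by (rule k_linear_compose[OF _ f]) (intro k_linear_intros k_linear_compose[OF X])

lemma k_linear_Tt_op:
  assumes X: "k_linear sM sM X" and f: "k_linear s1 sM f"
  shows "k_linear s1 sM (\<lambda>x. Tt_op \<Delta> S act X h (f x))"
  unfolding Tt_op_def by (intro k_linear_intros k_linear_compose[OF X] f)

lemma k_linear_Tt_op_index:
  assumes X: "k_linear sM sM X" and f: "k_linear s1 sH f"
  shows "k_linear s1 sM (\<lambda>x. Tt_op \<Delta> S act X (f x) m)"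
  unfolding Tt_op_def
  by (rule k_linear_compose[OF _ f]) (intro k_linear_intros k_linear_compose[OF X])

lemma T_op_one:
  assumes X: "k_linear sM sM X"
  shows "T_op \<Delta> S act X 1 = X"
proof
  fix m
  have "T_op \<Delta> S act X 1 m = act 1 (X (act (S 1) m))"
    unfolding T_op_def
    by (rule Delta_one[OF M.vector_space_axioms]) (intro k_linear_intros k_linear_compose[OF X])+
  then show "T_op \<Delta> S act X 1 m = X m"
    by (simp add: S_one act_one)
qed

lemma T_op_mult:
  assumes X: "k_linear sM sM X"
  shows "T_op \<Delta> S act X (g * h) = T_op \<Delta> S act (T_op \<Delta> S act X h) g"
proof
  fix m
  have "T_op \<Delta> S act X (g * h) m =
      swsum (\<lambda>a b. swsum (\<lambda>c d. act (a * c) (X (act (S (b * d)) m))) (\<Delta> h)) (\<Delta> g)"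
    unfolding T_op_def
    by (rule Delta_mult[OF M.vector_space_axioms]) (intro k_linear_intros k_linear_compose[OF X])+
  then show "T_op \<Delta> S act X (g * h) m = T_op \<Delta> S act (T_op \<Delta> S act X h) g m"
    by (simp add: T_op_def S_mult act_mult k_linear_swsum[OF k_linear_act])
qed

lemma swsum_T_op_act:
  assumes X: "k_linear sM sM X"
  shows "swsum (\<lambda>a b. T_op \<Delta> S act X a (act b m)) (\<Delta> h) = act h (X m)"
proof -
  have "swsum (\<lambda>a b. T_op \<Delta> S act X a (act b m)) (\<Delta> h) =
      swsum (\<lambda>a b. swsum (\<lambda>c d. act a (X (act (S c * d) m))) (\<Delta> b)) (\<Delta> h)"
    unfolding T_op_def act_mult
    by (rule Delta_coassoc[OF M.vector_space_axioms]) (intro k_linear_intros k_linear_compose[OF X])+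
  also have "\<dots> = swsum (\<lambda>a b. sM (\<epsilon> b) (act a (X m))) (\<Delta> h)"
    using swsum_antipode_left[where sV=sM and g="\<lambda>u. act a (X (act u m))" for a]
    by (simp add: k_linear_intros k_linear_compose[OF X] act_one)
  also have "\<dots> = act h (X m)"
    by (rule swsum_counit_right) (intro k_linear_intros)
  finally show ?thesis .
qed

lemma swsum_act_S_T_op:
  assumes X: "k_linear sM sM X"
  shows "swsum (\<lambda>a b. act (S a) (T_op \<Delta> S act X b m)) (\<Delta> h) = X (act (S h) m)"
proof -
  have "swsum (\<lambda>a b. act (S a) (T_op \<Delta> S act X b m)) (\<Delta> h) =
      swsum (\<lambda>a b. swsum (\<lambda>c d. act (S c * d) (X (act (S b) m))) (\<Delta> a)) (\<Delta> h)"
    unfolding T_op_def act_mult k_linear_swsum[OF k_linear_act]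
    by (rule Delta_coassoc[OF M.vector_space_axioms, symmetric])
      (intro k_linear_intros k_linear_compose[OF X])+
  also have "\<dots> = swsum (\<lambda>a b. sM (\<epsilon> a) (X (act (S b) m))) (\<Delta> h)"
    using swsum_antipode_left[where sV=sM and g="\<lambda>u. act u (X n)" for n]
    by (simp add: k_linear_intros act_one)
  also have "\<dots> = X (act (S h) m)"
    by (rule swsum_counit_left) (intro k_linear_intros k_linear_compose[OF X])
  finally show ?thesis .
qed

lemma swsum_act_Tt_op:
  assumes X: "k_linear sM sM X"
  shows "swsum (\<lambda>a b. act a (Tt_op \<Delta> S act X b m)) (\<Delta> h) = X (act h m)"
proof -
  have "swsum (\<lambda>a b. act a (Tt_op \<Delta> S act X b m)) (\<Delta> h) =
      swsum (\<lambda>a b. swsum (\<lambda>c d. act (c * S d) (X (act b m))) (\<Delta> a)) (\<Delta> h)"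
    unfolding Tt_op_def act_mult k_linear_swsum[OF k_linear_act]
    by (rule Delta_coassoc[OF M.vector_space_axioms, symmetric])
      (intro k_linear_intros k_linear_compose[OF X])+
  also have "\<dots> = swsum (\<lambda>a b. sM (\<epsilon> a) (X (act b m))) (\<Delta> h)"
    using swsum_antipode_right[where sV=sM and g="\<lambda>u. act u (X n)" for n]
    by (simp add: k_linear_intros act_one)
  also have "\<dots> = X (act h m)"
    by (rule swsum_counit_left) (intro k_linear_intros k_linear_compose[OF X])
  finally show ?thesis .
qed

lemma swsum_Tt_op_act_S:
  assumes X: "k_linear sM sM X"
  shows "swsum (\<lambda>a b. Tt_op \<Delta> S act X a (act (S b) m)) (\<Delta> h) = act (S h) (X m)"
proof -
  have "swsum (\<lambda>a b. Tt_op \<Delta> S act X a (act (S b) m)) (\<Delta> h) =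
      swsum (\<lambda>a b. swsum (\<lambda>c d. act (S a) (X (act (c * S d) m))) (\<Delta> b)) (\<Delta> h)"
    unfolding Tt_op_def act_mult
    by (rule Delta_coassoc[OF M.vector_space_axioms]) (intro k_linear_intros k_linear_compose[OF X])+
  also have "\<dots> = swsum (\<lambda>a b. sM (\<epsilon> b) (act (S a) (X m))) (\<Delta> h)"
    using swsum_antipode_right[where sV=sM and g="\<lambda>u. act a (X (act u m))" for a]
    by (simp add: k_linear_intros k_linear_compose[OF X] act_one)
  also have "\<dots> = act (S h) (X m)"
    by (rule swsum_counit_right) (intro k_linear_intros)
  finally show ?thesis .
qed

lemma commute_Tt_op:
  assumes Z: "k_linear sM sM Z" and T: "k_linear sM sM T"
    and commute: "\<And>d. T_op \<Delta> S act Z d \<circ> T = T \<circ> T_op \<Delta> S act Z d"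
  shows "Z \<circ> Tt_op \<Delta> S act T k = Tt_op \<Delta> S act T k \<circ> Z"
proof
  fix m
  have "Z (Tt_op \<Delta> S act T k m) = swsum (\<lambda>a b. Z (act (S a) (T (act b m)))) (\<Delta> k)"
    by (simp add: Tt_op_def k_linear_swsum[OF Z])
  also have "\<dots> = swsum (\<lambda>a b. swsum (\<lambda>c d.
      act (S c) (T (T_op \<Delta> S act Z d (act b m)))) (\<Delta> a)) (\<Delta> k)"
    using commute by (simp add: swsum_act_S_T_op[OF Z, symmetric] fun_eq_iff)
  also have "\<dots> = swsum (\<lambda>a b. swsum (\<lambda>c d.
      act (S a) (T (T_op \<Delta> S act Z c (act d m)))) (\<Delta> b)) (\<Delta> k)"
    by (rule Delta_coassoc[OF M.vector_space_axioms])
      (intro k_linear_intros k_linear_compose[OF T] k_linear_T_op[OF Z] k_linear_T_op_index[OF Z])+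
  also have "\<dots> = swsum (\<lambda>a b. act (S a) (T (swsum (\<lambda>c d.
      T_op \<Delta> S act Z c (act d m)) (\<Delta> b)))) (\<Delta> k)"
    by (simp add: k_linear_swsum[OF k_linear_act] k_linear_swsum[OF T])
  also have "\<dots> = Tt_op \<Delta> S act T k (Z m)"
    by (simp add: Tt_op_def swsum_T_op_act[OF Z])
  finally show "(Z \<circ> Tt_op \<Delta> S act T k) m = (Tt_op \<Delta> S act T k \<circ> Z) m"
    by simp
qed

lemma commute_T_op:
  assumes Z: "k_linear sM sM Z" and T: "k_linear sM sM T"
    and commute: "\<And>d. Tt_op \<Delta> S act Z d \<circ> T = T \<circ> Tt_op \<Delta> S act Z d"
  shows "Z \<circ> T_op \<Delta> S act T h = T_op \<Delta> S act T h \<circ> Z"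
proof
  fix m
  have "Z (T_op \<Delta> S act T h m) = swsum (\<lambda>a b. Z (act a (T (act (S b) m)))) (\<Delta> h)"
    by (simp add: T_op_def k_linear_swsum[OF Z])
  also have "\<dots> = swsum (\<lambda>a b. swsum (\<lambda>c d.
      act c (T (Tt_op \<Delta> S act Z d (act (S b) m)))) (\<Delta> a)) (\<Delta> h)"
    using commute by (simp add: swsum_act_Tt_op[OF Z, symmetric] fun_eq_iff)
  also have "\<dots> = swsum (\<lambda>a b. swsum (\<lambda>c d.
      act a (T (Tt_op \<Delta> S act Z c (act (S d) m)))) (\<Delta> b)) (\<Delta> h)"
    by (rule Delta_coassoc[OF M.vector_space_axioms])
      (intro k_linear_intros k_linear_compose[OF T] k_linear_Tt_op[OF Z] k_linear_Tt_op_index[OF Z])+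
  also have "\<dots> = swsum (\<lambda>a b. act a (T (swsum (\<lambda>c d.
      Tt_op \<Delta> S act Z c (act (S d) m)) (\<Delta> b)))) (\<Delta> h)"
    by (simp add: k_linear_swsum[OF k_linear_act] k_linear_swsum[OF T])
  also have "\<dots> = T_op \<Delta> S act T h (Z m)"
    by (simp add: T_op_def swsum_Tt_op_act_S[OF Z])
  finally show "(Z \<circ> T_op \<Delta> S act T h) m = (T_op \<Delta> S act T h \<circ> Z) m"
    by simp
qed

end

theorem mainTheorem5:
  fixes sH :: "'k::field \<Rightarrow> 'h::ring_1 \<Rightarrow> 'h"
    and \<Delta> :: "'h \<Rightarrow> ('h \<times> 'h) list" and \<epsilon> :: "'h \<Rightarrow> 'k" and S :: "'h \<Rightarrow> 'h"
    and sM :: "'k \<Rightarrow> 'm::ab_group_add \<Rightarrow> 'm" and act :: "'h \<Rightarrow> 'm \<Rightarrow> 'm"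
    and T :: "'m \<Rightarrow> 'm"
  assumes "hopf_algebra sH \<Delta> \<epsilon> S"
    and "bij S"
    and "left_hmodule sH sM act"
    and "Vector_Spaces.linear sM sM T"
    and "T \<circ> T = T"
  shows "((\<forall>h. T_op \<Delta> S act T h \<circ> T = T \<circ> T_op \<Delta> S act T h)
          \<longleftrightarrow> (\<forall>h. Tt_op \<Delta> S act T h \<circ> T = T \<circ> Tt_op \<Delta> S act T h))
       \<and> ((\<forall>h. Tt_op \<Delta> S act T h \<circ> T = T \<circ> Tt_op \<Delta> S act T h)
          \<longleftrightarrow> (\<forall>h k. T_op \<Delta> S act T h \<circ> Tt_op \<Delta> S act T k = Tt_op \<Delta> S act T k \<circ> T_op \<Delta> S act T h))"
proof -
  interpret hopf_module sH \<Delta> \<epsilon> S sM act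
    using assms(1,3) by (rule hopf_module.intro)
  have T: "k_linear sM sM T"
    using assms(4) by (simp add: linear_iff_k_linear)
  let ?i = "\<forall>h. T_op \<Delta> S act T h \<circ> T = T \<circ> T_op \<Delta> S act T h"
    and ?ii = "\<forall>h. Tt_op \<Delta> S act T h \<circ> T = T \<circ> Tt_op \<Delta> S act T h"
    and ?iii = "\<forall>h k. T_op \<Delta> S act T h \<circ> Tt_op \<Delta> S act T k = Tt_op \<Delta> S act T k \<circ> T_op \<Delta> S act T h"
  have "?ii" if ?i
    using commute_Tt_op[OF T T] that by metis
  moreover have "?i" if ?ii
    using commute_T_op[OF T T] that by metis
  moreover have "?iii" if ?i
  proof (intro allI)
    fix h k
    have "T_op \<Delta> S act (T_op \<Delta> S act T h) d \<circ> T = T \<circ> T_op \<Delta> S act (T_op \<Delta> S act T h) d" for d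
      using that by (simp add: T_op_mult[OF T, symmetric])
    then show "T_op \<Delta> S act T h \<circ> Tt_op \<Delta> S act T k = Tt_op \<Delta> S act T k \<circ> T_op \<Delta> S act T h"
      by (rule commute_Tt_op[OF k_linear_T_op[OF T k_linear_ident] T])
  qed
  moreover have "?ii" if ?iii
    using that[rule_format, of 1] by (simp add: T_op_one[OF T])
  ultimately show ?thesis
    by blast
qed

end
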